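(* Let $d\ge1$, $r\ge3$ and $n=dr\ge2$. If $r\ge 2^9$, then $$2^{n-2}r^2(2d+5)\Big(1-\frac{20\log_2^2 r}{2n+5r}\Big)\le \mathrm{td}(Q_n(d,r))\le 2^{n-2}r^2(2d+5)\Big(1-\frac{8(r-1)}{2nr+5r^2}\Big);$$ and if $3\le r<2^9$, then $$2^{n-2}(2nr+r^2)\le \mathrm{td}(Q_n(d,r))\le 2^{n-2}(2nr+5r^2-8r+8).$$
   Context: $\mathbb{Z}_2^n=\{0,1\}^n$ with coordinatewise addition mod 2; $e_i$ is the $i$-th standard basis vector, subscripts read modulo $n$. The recursive cube of rings $Q_n(d,r)$ (for $n\ge d$, $dr\equiv0\pmod n$) is the simple graph on $\mathbb{Z}_2^n\times\mathbb{Z}_r$ in which $(a,x)$ is adjacent to $(a+e_{i+dx},x)$ for $1\le i\le d$ and to $(a,x\pm1)$; it is vertex-transitive. For a vertex-transitive graph $X$, the total distance $\mathrm{td}(X)=\sum_{v\in V(X)}\mathrm{dist}(u,v)$ for any fixed vertex $u$ (here one may take $u=(0_n,0)$). $\log_2^2 r=(\log_2 r)^2$. *)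

theory Defs
  imports Complex_Main
begin

text \<open>Vertices of the recursive cube of rings Q_n(d,r): pairs (a,x) where a is an
element of Z_2^n, encoded as the set of coordinates equal to 1 (a subset of
{0..<n}; coordinate j of the paper, read mod n, is stored as j mod n), and
x is an element of Z_r, encoded as its representative in {0..<r}.
Adding the basis vector e_j is symmetric difference with the singleton {j mod n}.\<close>

definition rcr_vertices :: "nat \<Rightarrow> nat \<Rightarrow> (nat set \<times> nat) set" where
  "rcr_vertices n r = Pow {..<n} \<times> {..<r}"

definition rcr_adj :: "nat \<Rightarrow> nat \<Rightarrow> nat \<Rightarrow> (nat set \<times> nat) \<Rightarrow> (nat set \<times> nat) \<Rightarrow> bool" where
  "rcr_adj n d r u v \<longleftrightarrow>
     (\<exists>i\<in>{1..d}. v = (fst u \<union> {(i + d * snd u) mod n} - (fst u \<inter> {(i + d * snd u) mod n}), snd u))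
   \<or> (fst v = fst u \<and> (snd v = (snd u + 1) mod r \<or> snd v = (snd u + r - 1) mod r))"

definition rcr_edges :: "nat \<Rightarrow> nat \<Rightarrow> nat \<Rightarrow> ((nat set \<times> nat) \<times> (nat set \<times> nat)) set" where
  "rcr_edges n d r = {(u, v). u \<in> rcr_vertices n r \<and> v \<in> rcr_vertices n r \<and> rcr_adj n d r u v}"

definition rcr_dist :: "nat \<Rightarrow> nat \<Rightarrow> nat \<Rightarrow> (nat set \<times> nat) \<Rightarrow> (nat set \<times> nat) \<Rightarrow> nat" where
  "rcr_dist n d r u v = (LEAST k. (u, v) \<in> rcr_edges n d r ^^ k)"

text \<open>Total distance from the vertex (0_n, 0) (the graph is vertex-transitive).\<close>
definition rcr_td :: "nat \<Rightarrow> nat \<Rightarrow> nat \<Rightarrow> nat" where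
  "rcr_td n d r = (\<Sum>v\<in>rcr_vertices n r. rcr_dist n d r ({}, 0) v)"

end

theory Submission
  imports Defs
begin

(* The basis vector e_j can only be added while standing at one ring position, the block of j.
   So (a, x) is reached from (0, 0) by a walk around the ring Z_r that visits the blocks of all
   coordinates of a, flipping each of them once: the distance is |a| plus the length of the
   shortest such ring walk ending at x.

   Upper bound: one of two zigzag walks that sweep all r positions and end at x.

   Lower bound: lift a ring walk to Z.  It runs from some e = 0 (mod r) to some z = x (mod r),
   its range [lo, hi] meets the residue class of every visited block, and its length is at least
   2 (hi - lo) - |z - e|.  This is at least the cyclic distance from 0 to x (plus 2 when x = 0
   and block 1 must be visited), which gives the bound for small r.  For large r, all but
   r 2^(n-g) sets a meet every arc of g ~ 2 log2 r consecutive ring positions; for those the lift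
   must cover all but g positions, so the ring part costs about r + min x (r - x). *)

(* At ring position y the coordinates (i + d y) mod n, 1 <= i <= d, can be flipped; block d r j
   is the unique such y for coordinate j (coordinate 0 stands for n and belongs to y = r - 1). *)
definition block :: "nat \<Rightarrow> nat \<Rightarrow> nat \<Rightarrow> nat" where
  "block d r j = (if j = 0 then r - 1 else (j - 1) div d)"

lemma block_flip_coord:
  assumes "d \<ge> 1" "i \<in> {1..d}" "y < r"
  shows "block d r ((i + d * y) mod (d * r)) = y"
proof (cases "i + d * y < d * r")
  case True
  have "(i + d * y - 1) div d = (i - 1 + d * y) div d"
    using assms(2) by simp
  also have "\<dots> = y"
    using assms(1,2) by (simp only: div_mult_self2) (auto intro: div_less)
  finally show ?thesis
    using True assms(2) by (simp add: block_def)
next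
  case False
  have dr: "d * (r - 1) = d * r - d" "d \<le> d * r"
    using assms(3) by (simp_all add: diff_mult_distrib2)
  have "d * y \<le> d * (r - 1)" "i \<le> d"
    using assms(2,3) by (auto intro: mult_le_mono2)
  then have sum: "i + d * y = d * r"
    using False dr by linarith
  then have "d * (r - 1) \<le> d * y"
    using \<open>i \<le> d\<close> dr by linarith
  then have "y = r - 1"
    using assms(1,3) by simp
  then show ?thesis
    using sum by (simp add: block_def)
qed

lemma block_less:
  assumes "j < d * r"
  shows "block d r j < r"
proof -
  have "d > 0"
    using assms by (cases d) auto
  then show ?thesis
    using assms by (auto simp: block_def div_less_iff_less_mult mult.commute)
qed

lemma flip_coord_block:
  assumes "d \<ge> 1" "j < d * r"
  shows "\<exists>i\<in>{1..d}. j = (i + d * block d r j) mod (d * r)"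
proof (cases "j = 0")
  case True
  have "d + d * (r - 1) = d * r"
    using assms by (cases r) auto
  then show ?thesis
    using True assms(1) by (auto simp: block_def intro!: bexI[of _ d])
next
  case False
  have "(j - 1) mod d + 1 + d * ((j - 1) div d) = j"
    using False by simp
  moreover have "(j - 1) mod d + 1 \<in> {1..d}"
    using assms(1) by (simp add: Suc_leI)
  ultimately show ?thesis
    using False assms(2) by (metis block_def mod_less)
qed

(* A ring walk from 0 to x visiting the positions S, lifted to Z: it runs from e to z and its
   range is [lo, hi].  sweep_cost lo hi e z is the length of the shortest walk on Z from e to z
   that visits both lo and hi. *)
definition lifted_sweep :: "nat \<Rightarrow> nat set \<Rightarrow> nat \<Rightarrow> int \<Rightarrow> int \<Rightarrow> int \<Rightarrow> int \<Rightarrow> bool" where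
  "lifted_sweep r S x lo hi e z \<longleftrightarrow>
     lo \<le> e \<and> e \<le> hi \<and> lo \<le> z \<and> z \<le> hi \<and> e mod int r = 0 \<and> z mod int r = int x
     \<and> (\<forall>s\<in>S. \<exists>w\<in>{lo..hi}. w mod int r = int s)"

definition sweep_cost :: "int \<Rightarrow> int \<Rightarrow> int \<Rightarrow> int \<Rightarrow> int" where
  "sweep_cost lo hi e z = 2 * (hi - lo) - \<bar>z - e\<bar>"

lemma lifted_sweep_mono:
  assumes "lifted_sweep r S x lo hi e z" "S' \<subseteq> insert x S"
  shows "lifted_sweep r S' x lo hi e z"
proof -
  have "\<exists>w\<in>{lo..hi}. w mod int r = int x"
    using assms(1) unfolding lifted_sweep_def by auto
  then show ?thesis
    using assms unfolding lifted_sweep_def by blast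
qed

lemma lifted_sweep_step:
  assumes "lifted_sweep r S x lo hi e z" "r \<ge> 1"
    and "x' = (x + 1) mod r \<or> x' = (x + r - 1) mod r"
  obtains lo' hi' z' where "lifted_sweep r S x' lo' hi' e z'"
    and "sweep_cost lo' hi' e z' \<le> sweep_cost lo hi e z + 1"
proof -
  obtain z' where z': "\<bar>z' - z\<bar> = 1" "z' mod int r = int x'"
  proof (cases "x' = (x + 1) mod r")
    case True
    have "(z + 1) mod int r = (z mod int r + 1) mod int r"
      by (simp add: mod_add_left_eq)
    also have "\<dots> = int x'"
      using assms(1) True by (simp add: lifted_sweep_def zmod_int add.commute)
    finally have "(z + 1) mod int r = int x'" .
    then show ?thesis
      using that[of "z + 1"] by simp
  next
    case False
    then have "int x' = (int x + int r - 1) mod int r"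
      using assms(2,3) by (simp add: zmod_int)
    also have "\<dots> = (z mod int r - 1) mod int r"
      using assms(1) mod_add_self2[of "int x - 1" "int r"] by (simp add: lifted_sweep_def algebra_simps)
    also have "\<dots> = (z - 1) mod int r"
      by (simp add: mod_diff_left_eq)
    finally show ?thesis
      using that[of "z - 1"] by simp
  qed
  show ?thesis
  proof (rule that)
    show "lifted_sweep r S x' (min lo z') (max hi z') e z'"
    proof -
      have "{lo..hi} \<subseteq> {min lo z'..max hi z'}"
        by auto
      then have "\<forall>s\<in>S. \<exists>w\<in>{min lo z'..max hi z'}. w mod int r = int s"
        using assms(1) unfolding lifted_sweep_def by blast
      then show ?thesis
        using assms(1) z'(2) unfolding lifted_sweep_def by (simp add: min_le_iff_disj le_max_iff_disj)
    qed
    show "sweep_cost (min lo z') (max hi z') e z' \<le> sweep_cost lo hi e z + 1"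
      using assms(1) z'(1) unfolding lifted_sweep_def sweep_cost_def by (simp add: min_def max_def) arith
  qed
qed

lemma card_flip_le:
  assumes "finite a"
  shows "card (a \<union> {j} - (a \<inter> {j})) \<le> card a + 1"
proof -
  have "card (a \<union> {j} - (a \<inter> {j})) \<le> card (insert j a)"
    using assms by (intro card_mono) auto
  also have "\<dots> \<le> card a + 1"
    by (simp add: card_insert_le_m1)
  finally show ?thesis .
qed

lemma rcr_edge_lifted_sweep:
  assumes "d \<ge> 1" "n = d * r" "((a', x'), (a, x)) \<in> rcr_edges n d r"
    and "lifted_sweep r (block d r ` a') x' lo hi e z"
  obtains lo' hi' z' where "lifted_sweep r (block d r ` a) x lo' hi' e z'"
    and "int (card a) + sweep_cost lo' hi' e z' \<le> int (card a') + sweep_cost lo hi e z + 1"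
proof -
  have "a' \<subseteq> {..<n}" "x' < r"
    using assms(3) by (auto simp: rcr_edges_def rcr_vertices_def)
  then have fin: "finite a'"
    using finite_subset by blast
  from assms(3) consider (flip) i where "i \<in> {1..d}" "x = x'"
      "a = a' \<union> {(i + d * x') mod n} - (a' \<inter> {(i + d * x') mod n})"
    | (move) "a = a'" "x = (x' + 1) mod r \<or> x = (x' + r - 1) mod r"
    unfolding rcr_edges_def rcr_adj_def by auto
  then show ?thesis
  proof cases
    case flip
    have card: "card a \<le> card a' + 1"
      using card_flip_le[OF fin] flip(3) by simp
    have "block d r ((i + d * x') mod n) = x"
      using block_flip_coord[OF assms(1) flip(1) \<open>x' < r\<close>] flip(2) assms(2) by simp
    moreover have "a \<subseteq> insert ((i + d * x') mod n) a'"
      using flip(3) by blast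
    ultimately have "block d r ` a \<subseteq> insert x (block d r ` a')"
      using image_mono by fastforce
    then have "lifted_sweep r (block d r ` a) x lo hi e z"
      by (rule lifted_sweep_mono[OF assms(4)[folded flip(2)]])
    moreover have "int (card a) + sweep_cost lo hi e z \<le> int (card a') + sweep_cost lo hi e z + 1"
      using card by linarith
    ultimately show ?thesis
      by (rule that)
  next
    case move
    obtain lo' hi' z' where "lifted_sweep r (block d r ` a') x lo' hi' e z'"
      and "sweep_cost lo' hi' e z' \<le> sweep_cost lo hi e z + 1"
      using lifted_sweep_step[OF assms(4) _ move(2)] \<open>x' < r\<close> by auto
    then show ?thesis
      using that move(1) by simp
  qed
qed

lemma rcr_walk_lifted_sweep:
  assumes "d \<ge> 1" "n = d * r"
    and "(({}, 0), (a, x)) \<in> rcr_edges n d r ^^ k"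
  shows "\<exists>lo hi e z. lifted_sweep r (block d r ` a) x lo hi e z
           \<and> int (card a) + sweep_cost lo hi e z \<le> int k"
  using assms(3)
proof (induction k arbitrary: a x)
  case 0
  then have "a = {}" "x = 0"
    by simp_all
  then have "lifted_sweep r (block d r ` a) x 0 0 0 0 \<and> int (card a) + sweep_cost 0 0 0 0 \<le> int 0"
    by (simp add: lifted_sweep_def sweep_cost_def)
  then show ?case
    by blast
next
  case (Suc k)
  from Suc.prems obtain a' x' where walk: "(({}, 0), (a', x')) \<in> rcr_edges n d r ^^ k"
    and edge: "((a', x'), (a, x)) \<in> rcr_edges n d r"
    by (metis relpow_Suc_E surj_pair)
  obtain lo hi e z where sweep: "lifted_sweep r (block d r ` a') x' lo hi e z"
    and cost: "int (card a') + sweep_cost lo hi e z \<le> int k"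
    using Suc.IH[OF walk] by blast
  obtain lo' hi' z' where "lifted_sweep r (block d r ` a) x lo' hi' e z'"
    and "int (card a) + sweep_cost lo' hi' e z' \<le> int (card a') + sweep_cost lo hi e z + 1"
    by (rule rcr_edge_lifted_sweep[OF assms(1,2) edge sweep])
  moreover have "int (card a') + sweep_cost lo hi e z + 1 \<le> int (Suc k)"
    using cost by simp
  ultimately show ?case
    by fastforce
qed

lemma rcr_dist_ge_sweep_bound:
  assumes "d \<ge> 1" "n = d * r"
    and "(({}, 0), (a, x)) \<in> rcr_edges n d r ^^ k"
    and "\<And>lo hi e z. lifted_sweep r (block d r ` a) x lo hi e z \<Longrightarrow> c \<le> sweep_cost lo hi e z"
  shows "int (card a) + c \<le> int (rcr_dist n d r ({}, 0) (a, x))"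
proof -
  have "(({}, 0), (a, x)) \<in> rcr_edges n d r ^^ rcr_dist n d r ({}, 0) (a, x)"
    unfolding rcr_dist_def using assms(3) by (rule LeastI)
  then show ?thesis
    using rcr_walk_lifted_sweep[OF assms(1,2)] assms(4) by fastforce
qed

lemma abs_mod_cases:
  fixes D :: int
  assumes "D mod int r = int x" "x < r"
  shows "\<bar>D\<bar> = int x \<or> \<bar>D\<bar> = int r - int x \<or> int r + int (min x (r - x)) \<le> \<bar>D\<bar>"
proof -
  obtain q where D: "D = q * int r + int x"
    using assms(1) div_mult_mod_eq[of D "int r"] by metis
  have m: "int (min x (r - x)) \<le> int x" "int (min x (r - x)) \<le> int r - int x"
    using assms(2) by auto
  consider "q = 0" | "q = -1" | "q \<ge> 1" | "q \<le> -2"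
    by linarith
  then show ?thesis
  proof cases
    case 3
    then have "int r \<le> q * int r"
      using mult_right_mono[of 1 q "int r"] by simp
    then have "int r + int (min x (r - x)) \<le> D"
      using D m(1) by linarith
    then show ?thesis
      by simp
  next
    case 4
    then have "q * int r \<le> -2 * int r"
      using mult_right_mono[of q "-2" "int r"] by simp
    then have "int r + int (min x (r - x)) \<le> - D"
      using D m(2) by linarith
    then show ?thesis
      by simp
  qed (use D assms(2) in simp_all)
qed

lemma lifted_sweep_ends:
  assumes "lifted_sweep r S x lo hi e z"
  shows "lo \<le> e" "e \<le> hi" "lo \<le> z" "z \<le> hi"
  using assms by (simp_all add: lifted_sweep_def)

lemma lifted_sweep_diff_mod:
  assumes "lifted_sweep r S x lo hi e z"
  shows "(z - e) mod int r = int x"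
  using assms unfolding lifted_sweep_def by (metis diff_zero mod_diff_right_eq)

lemma sweep_cost_ge_abs:
  assumes "lifted_sweep r S x lo hi e z"
  shows "\<bar>z - e\<bar> \<le> sweep_cost lo hi e z"
  using lifted_sweep_ends[OF assms] unfolding sweep_cost_def by arith

lemma sweep_cost_ge_cyclic_dist:
  assumes "lifted_sweep r S x lo hi e z" "x < r"
  shows "int (min x (r - x)) \<le> sweep_cost lo hi e z"
  using abs_mod_cases[OF lifted_sweep_diff_mod[OF assms(1)] assms(2)] sweep_cost_ge_abs[OF assms(1)]
  by auto

lemma sweep_cost_ge_two:
  assumes "lifted_sweep r S 0 lo hi e z" "1 \<in> S" "r \<ge> 2"
  shows "2 \<le> sweep_cost lo hi e z"
proof (cases "z = e")
  case True
  obtain w where "lo \<le> w" "w \<le> hi" "w mod int r = 1"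
    using assms(1,2) unfolding lifted_sweep_def by fastforce
  moreover have "e mod int r = 0"
    using assms(1) unfolding lifted_sweep_def by simp
  ultimately have "1 \<le> hi - lo"
    using lifted_sweep_ends[OF assms(1)] by (cases "w = e") auto
  then show ?thesis
    using True unfolding sweep_cost_def by simp
next
  case False
  have "int r dvd z - e"
    using lifted_sweep_diff_mod[OF assms(1)] by (simp add: dvd_eq_mod_eq_0)
  then have "int r \<le> \<bar>z - e\<bar>"
    using False dvd_imp_le_int[of "z - e" "int r"] by simp
  then show ?thesis
    using sweep_cost_ge_abs[OF assms(1)] assms(3) by linarith
qed

definition meets_all_arcs :: "nat \<Rightarrow> nat \<Rightarrow> nat set \<Rightarrow> bool" where
  "meets_all_arcs r g S \<longleftrightarrow> (\<forall>y<r. \<exists>t<g. (y + t) mod r \<in> S)"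

lemma lifted_sweep_width:
  assumes "lifted_sweep r S x lo hi e z" "meets_all_arcs r g S" "r \<ge> 1"
  shows "int r - int g \<le> hi - lo"
proof (rule ccontr)
  assume short: "\<not> ?thesis"
  define y where "y = nat ((hi + 1) mod int r)"
  have "y < r"
    using assms(3) unfolding y_def by (simp add: nat_less_iff)
  then obtain t where t: "t < g" "(y + t) mod r \<in> S"
    using assms(2) unfolding meets_all_arcs_def by blast
  then obtain w where w: "lo \<le> w" "w \<le> hi" "w mod int r = int ((y + t) mod r)"
    using assms(1) unfolding lifted_sweep_def by (meson atLeastAtMost_iff)
  have "int y = (hi + 1) mod int r"
    using assms(3) unfolding y_def by simp
  then have "int ((y + t) mod r) = ((hi + 1) mod int r + int t) mod int r"
    by (simp add: zmod_int)
  also have "\<dots> = (hi + 1 + int t) mod int r"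
    by (simp add: mod_add_left_eq)
  finally have "(hi + 1 + int t) mod int r = w mod int r"
    using w(3) by simp
  then have "int r dvd (hi + 1 + int t - w)"
    by (simp only: mod_eq_dvd_iff)
  moreover have "0 < hi + 1 + int t - w"
    using w(2) by linarith
  ultimately have "int r \<le> hi + 1 + int t - w"
    by (rule zdvd_imp_le)
  then show False
    using w(1) t(1) short by linarith
qed

lemma sweep_cost_ge_arcs:
  assumes "lifted_sweep r S x lo hi e z" "meets_all_arcs r g S" "x < r"
  shows "int r + int (min x (r - x)) - 2 * int g \<le> sweep_cost lo hi e z"
proof -
  have width: "int r - int g \<le> hi - lo"
    using lifted_sweep_width[OF assms(1,2)] assms(3) by simp
  have "\<bar>z - e\<bar> \<le> hi - lo"
    using lifted_sweep_ends[OF assms(1)] by arith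
  then show ?thesis
    using abs_mod_cases[OF lifted_sweep_diff_mod[OF assms(1)] assms(3)] width
    unfolding sweep_cost_def by auto
qed

lemma nat_mod_succ:
  fixes p :: int
  assumes "r > 0"
  shows "nat ((p + 1) mod int r) = (nat (p mod int r) + 1) mod r"
proof -
  have "int ((nat (p mod int r) + 1) mod r) = (p + 1) mod int r"
    using assms by (simp add: zmod_int mod_add_left_eq mod_add_right_eq ac_simps)
  then show ?thesis
    by linarith
qed

lemma nat_mod_pred:
  fixes p :: int
  assumes "r > 0"
  shows "nat ((p - 1) mod int r) = (nat (p mod int r) + r - 1) mod r"
proof -
  have "int ((nat (p mod int r) + r - 1) mod r) = (p mod int r - 1 + int r) mod int r"
    using assms by (simp add: zmod_int algebra_simps)
  also have "\<dots> = (p - 1) mod int r"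
    by (simp add: mod_diff_left_eq)
  finally show ?thesis
    by linarith
qed

lemma rcr_edge_ring_step:
  assumes "b \<subseteq> {..<n}" "r > 0" "\<bar>p' - p\<bar> = 1"
  shows "((b, nat (p mod int r)), (b, nat (p' mod int r))) \<in> rcr_edges n d r"
proof -
  have "p' = p + 1 \<or> p' = p - 1"
    using assms(3) by arith
  then show ?thesis
    using assms(1,2) nat_mod_succ[OF assms(2), of p] nat_mod_pred[OF assms(2), of p]
    by (auto simp: rcr_edges_def rcr_vertices_def rcr_adj_def nat_less_iff)
qed

lemma rcr_walk_add_coords:
  assumes "d \<ge> 1" "n = d * r" "y < r"
  shows "finite c \<Longrightarrow> b \<subseteq> {..<n} \<Longrightarrow> c \<subseteq> {..<n} \<Longrightarrow> b \<inter> c = {}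
    \<Longrightarrow> (\<forall>j\<in>c. block d r j = y) \<Longrightarrow> ((b, y), (b \<union> c, y)) \<in> rcr_edges n d r ^^ card c"
proof (induction c rule: finite_induct)
  case empty
  then show ?case
    by simp
next
  case (insert j c)
  have "j < n" "block d r j = y"
    using insert.prems by auto
  then obtain i where i: "i \<in> {1..d}" "j = (i + d * y) mod n"
    using flip_coord_block[OF assms(1)] assms(2) by blast
  have "b \<union> insert j c = b \<union> c \<union> {j} - ((b \<union> c) \<inter> {j})"
    using insert.prems(3) insert.hyps(2) by auto
  then have "rcr_adj n d r (b \<union> c, y) (b \<union> insert j c, y)"
    unfolding rcr_adj_def using i(1) by (intro disjI1 bexI[of _ i]) (simp_all add: i(2)[symmetric])
  moreover have "b \<union> insert j c \<subseteq> {..<n}"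
    using insert.prems(1,2) by blast
  ultimately have edge: "((b \<union> c, y), (b \<union> insert j c, y)) \<in> rcr_edges n d r"
    unfolding rcr_edges_def rcr_vertices_def using insert.prems(1,2) assms(3) by blast
  have "((b, y), (b \<union> c, y)) \<in> rcr_edges n d r ^^ card c"
    by (rule insert.IH) (use insert.prems in auto)
  then have "((b, y), (b \<union> insert j c, y)) \<in> rcr_edges n d r ^^ Suc (card c)"
    using edge by (rule relpow_Suc_I)
  then show ?case
    using insert.hyps by simp
qed

lemma rcr_walk_step_add_coords:
  assumes "d \<ge> 1" "n = d * r" "r > 0" "b \<subseteq> {..<n}" "finite c" "c \<subseteq> {..<n}" "b \<inter> c = {}"
    and "\<bar>p' - p\<bar> = 1" "\<forall>j\<in>c. block d r j = nat (p' mod int r)"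
  shows "((b, nat (p mod int r)), (b \<union> c, nat (p' mod int r))) \<in> rcr_edges n d r ^^ Suc (card c)"
proof -
  have "nat (p' mod int r) < r"
    using assms(3) by (simp add: nat_less_iff)
  then have "((b, nat (p' mod int r)), (b \<union> c, nat (p' mod int r))) \<in> rcr_edges n d r ^^ card c"
    by (rule rcr_walk_add_coords[OF assms(1,2) _ assms(5,4,6,7,9)])
  with rcr_edge_ring_step[OF assms(4,3,8)] show ?thesis
    by (rule relpow_Suc_I2)
qed

lemma rcr_walk_along_path:
  assumes "d \<ge> 1" "n = d * r" "r > 0"
    and "\<forall>i<m. \<bar>p (Suc i) - p i\<bar> = 1"
  shows "finite c \<Longrightarrow> b \<subseteq> {..<n} \<Longrightarrow> c \<subseteq> {..<n} \<Longrightarrow> b \<inter> c = {}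
    \<Longrightarrow> (\<forall>j\<in>c. \<exists>i\<le>m. block d r j = nat (p i mod int r))
    \<Longrightarrow> ((b, nat (p 0 mod int r)), (b \<union> c, nat (p m mod int r))) \<in> rcr_edges n d r ^^ (m + card c)"
  using assms(4)
proof (induction m arbitrary: c)
  case 0
  then show ?case
    using rcr_walk_add_coords[OF assms(1,2)] assms(3) by (simp add: nat_less_iff)
next
  case (Suc m)
  define pos where "pos i = nat (p i mod int r)" for i
  define c2 where "c2 = {j\<in>c. block d r j = pos (Suc m)}"
  define c1 where "c1 = c - c2"
  have split: "c = c1 \<union> c2" "c1 \<inter> c2 = {}"
    unfolding c1_def c2_def by auto
  have fin: "finite c1" "finite c2"
    using Suc.prems(1) split(1) by auto
  have "\<exists>i\<le>m. block d r j = pos i" if "j \<in> c1" for j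
  proof -
    have "j \<in> c" "block d r j \<noteq> pos (Suc m)"
      using that unfolding c1_def c2_def by auto
    moreover obtain i where "i \<le> Suc m" "block d r j = pos i"
      using \<open>j \<in> c\<close> Suc.prems(5) unfolding pos_def by blast
    ultimately show ?thesis
      using le_Suc_eq by auto
  qed
  then have "((b, pos 0), (b \<union> c1, pos m)) \<in> rcr_edges n d r ^^ (m + card c1)"
    unfolding pos_def by (intro Suc.IH) (use Suc.prems fin split in auto)
  moreover have "((b \<union> c1, pos m), (b \<union> c1 \<union> c2, pos (Suc m))) \<in> rcr_edges n d r ^^ Suc (card c2)"
    unfolding pos_def
  proof (rule rcr_walk_step_add_coords[OF assms(1-3) _ fin(2)])
    show "b \<union> c1 \<subseteq> {..<n}" "c2 \<subseteq> {..<n}" "(b \<union> c1) \<inter> c2 = {}"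
      using Suc.prems(2-4) split by auto
    show "\<bar>p (Suc m) - p m\<bar> = 1"
      using Suc.prems(6) by simp
    show "\<forall>j\<in>c2. block d r j = nat (p (Suc m) mod int r)"
      unfolding c2_def pos_def by simp
  qed
  ultimately have "((b, pos 0), (b \<union> c1 \<union> c2, pos (Suc m))) \<in> rcr_edges n d r ^^ (m + card c1 + Suc (card c2))"
    unfolding relpow_add by (rule relcompI)
  moreover have "card c = card c1 + card c2"
    using fin split by (simp add: card_Un_disjoint)
  ultimately show ?case
    using split(1) unfolding pos_def by (simp add: sup_assoc add.assoc)
qed

lemma rcr_walk_covering_window:
  assumes "d \<ge> 1" "n = d * r" "r > 0" "a \<subseteq> {..<n}"
    and "p 0 = 0" "\<forall>i<m. \<bar>p (Suc i) - p i\<bar> = 1"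
    and "{lo..<lo + int r} \<subseteq> p ` {..m}" "p m mod int r = int x"
  shows "(({}, 0), (a, x)) \<in> rcr_edges n d r ^^ (m + card a)"
proof -
  have "\<exists>i\<le>m. block d r j = nat (p i mod int r)" if "j \<in> a" for j
  proof -
    define t where "t = lo + (int (block d r j) - lo) mod int r"
    have "t \<in> {lo..<lo + int r}"
      using assms(3) unfolding t_def by simp
    then obtain i where "i \<le> m" "p i = t"
      using assms(7) by auto
    moreover have "block d r j < r"
      using block_less that assms(2,4) by auto
    then have "t mod int r = int (block d r j)"
      unfolding t_def by (simp add: mod_add_right_eq)
    ultimately show ?thesis
      by auto
  qed
  moreover have "finite a"
    using assms(4) finite_subset by blast
  ultimately have "(({}, nat (p 0 mod int r)), ({} \<union> a, nat (p m mod int r))) \<in> rcr_edges n d r ^^ (m + card a)"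
    using assms(4) by (intro rcr_walk_along_path[OF assms(1-3,6)]) auto
  then show ?thesis
    using assms(5,8) by simp
qed

definition zigzag :: "int \<Rightarrow> nat \<Rightarrow> nat \<Rightarrow> int" where
  "zigzag s u i = s * (if i \<le> u then int i else 2 * int u - int i)"

lemma zigzag_step:
  assumes "s = 1 \<or> s = -1"
  shows "\<bar>zigzag s u (Suc i) - zigzag s u i\<bar> = 1"
  using assms unfolding zigzag_def by auto

lemma zigzag_end:
  assumes "v \<le> int u"
  shows "zigzag s u (nat (2 * int u - v)) = s * v"
proof (cases "nat (2 * int u - v) \<le> u")
  case True
  then have "v = int u"
    using assms by linarith
  then show ?thesis
    unfolding zigzag_def by simp
next
  case False
  then show ?thesis
    using assms unfolding zigzag_def by simp
qed

lemma zigzag_covers: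
  assumes "s = 1 \<or> s = -1" "v \<le> int u" "min 0 v \<le> s * t" "s * t \<le> int u"
  shows "t \<in> zigzag s u ` {..nat (2 * int u - v)}"
proof -
  have t: "t = s * (s * t)"
    using assms(1) by auto
  show ?thesis
  proof (cases "s * t \<ge> 0")
    case True
    then have "zigzag s u (nat (s * t)) = t"
      using t assms(4) unfolding zigzag_def by auto
    moreover have "nat (s * t) \<le> nat (2 * int u - v)"
      using assms(2,4) by (intro nat_mono) linarith
    ultimately show ?thesis
      by (intro rev_image_eqI[of "nat (s * t)"]) auto
  next
    case False
    then have "zigzag s u (nat (2 * int u - s * t)) = t"
      using t unfolding zigzag_def by auto
    moreover have "nat (2 * int u - s * t) \<le> nat (2 * int u - v)"
      using assms(3) False by (intro nat_mono) linarith
    ultimately show ?thesis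
      by (intro rev_image_eqI[of "nat (2 * int u - s * t)"]) auto
  qed
qed

lemma rcr_walk_zigzag:
  assumes "d \<ge> 1" "n = d * r" "r > 0" "a \<subseteq> {..<n}"
    and "s = 1 \<or> s = -1" "v \<le> int u" "int r \<le> int u - min 0 v + 1" "(s * v) mod int r = int x"
  shows "(({}, 0), (a, x)) \<in> rcr_edges n d r ^^ (nat (2 * int u - v) + card a)"
proof (rule rcr_walk_covering_window[OF assms(1-4)])
  define lo where "lo = (if s = 1 then min 0 v else - int u)"
  have "min 0 v \<le> s * t \<and> s * t \<le> int u" if "t \<in> {lo..<lo + int r}" for t
    using assms(5,7) that unfolding lo_def by auto
  then show "{lo..<lo + int r} \<subseteq> zigzag s u ` {..nat (2 * int u - v)}"
    using zigzag_covers[OF assms(5,6)] by blast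
  show "zigzag s u (nat (2 * int u - v)) mod int r = int x"
    using zigzag_end[OF assms(6)] assms(8) by simp
qed (use zigzag_step[OF assms(5)] in \<open>simp_all add: zigzag_def\<close>)

(* For x > 0: go up to x - 1 and then down to x - r, or go down to x + 1 - r and then up to x. *)
definition ring_tour_length :: "nat \<Rightarrow> nat \<Rightarrow> nat" where
  "ring_tour_length r x = (if x = 0 then r else min (r + x - 2) (2 * r - x - 2))"

lemma rcr_walk_ring_tour:
  assumes "d \<ge> 1" "n = d * r" "a \<subseteq> {..<n}" "x < r"
  shows "(({}, 0), (a, x)) \<in> rcr_edges n d r ^^ (ring_tour_length r x + card a)"
proof -
  note zigzag = rcr_walk_zigzag[OF assms(1,2) _ assms(3)]
  show ?thesis
  proof (cases "x = 0")
    case True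
    then show ?thesis
      using zigzag[of 1 "int r" r x] assms(4) by (simp add: ring_tour_length_def)
  next
    case False
    have "nat (2 * int (x - 1) - (int x - int r)) = r + x - 2"
      using False by linarith
    then have "(({}, 0), (a, x)) \<in> rcr_edges n d r ^^ ((r + x - 2) + card a)"
      using zigzag[of 1 "int x - int r" "x - 1" x] False assms(4) by simp
    moreover have "nat (2 * int (r - x - 1) - - int x) = 2 * r - x - 2"
      using assms(4) by linarith
    then have "(({}, 0), (a, x)) \<in> rcr_edges n d r ^^ ((2 * r - x - 2) + card a)"
      using zigzag[of "-1" "- int x" "r - x - 1" x] assms(4) by simp
    ultimately show ?thesis
      using False by (simp add: ring_tour_length_def min_def)
  qed
qed

lemma rcr_dist_le_ring_tour:
  assumes "d \<ge> 1" "n = d * r" "a \<subseteq> {..<n}" "x < r"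
  shows "rcr_dist n d r ({}, 0) (a, x) \<le> ring_tour_length r x + card a"
  unfolding rcr_dist_def using rcr_walk_ring_tour[OF assms] by (rule Least_le)

lemma rcr_dist_ge_cyclic_dist:
  assumes "d \<ge> 1" "n = d * r" "a \<subseteq> {..<n}" "x < r"
  shows "card a + min x (r - x) \<le> rcr_dist n d r ({}, 0) (a, x)"
proof -
  have "int (card a) + int (min x (r - x)) \<le> int (rcr_dist n d r ({}, 0) (a, x))"
    by (rule rcr_dist_ge_sweep_bound[OF assms(1,2) rcr_walk_ring_tour[OF assms]])
      (rule sweep_cost_ge_cyclic_dist[OF _ assms(4)])
  then show ?thesis
    by simp
qed

lemma rcr_dist_ge_two:
  assumes "d \<ge> 1" "n = d * r" "a \<subseteq> {..<n}" "r \<ge> 2" "1 \<in> block d r ` a"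
  shows "card a + 2 \<le> rcr_dist n d r ({}, 0) (a, 0)"
proof -
  have "int (card a) + 2 \<le> int (rcr_dist n d r ({}, 0) (a, 0))"
    using assms(4) by (intro rcr_dist_ge_sweep_bound[OF assms(1,2) rcr_walk_ring_tour[OF assms(1-3)]])
      (auto intro: sweep_cost_ge_two[OF _ assms(5,4)])
  then show ?thesis
    by simp
qed

lemma rcr_dist_ge_arcs:
  assumes "d \<ge> 1" "n = d * r" "a \<subseteq> {..<n}" "x < r" "meets_all_arcs r g (block d r ` a)"
  shows "int (card a) + int r + int (min x (r - x)) - 2 * int g \<le> int (rcr_dist n d r ({}, 0) (a, x))"
  using rcr_dist_ge_sweep_bound[OF assms(1,2) rcr_walk_ring_tour[OF assms(1-4)]]
    sweep_cost_ge_arcs[OF _ assms(5,4)] by fastforce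

lemma card_Pow_member:
  assumes "finite A" "j \<in> A"
  shows "card {a \<in> Pow A. j \<in> a} = 2 ^ (card A - 1)"
proof -
  have "{a \<in> Pow A. j \<in> a} = Pow A - Pow (A - {j})"
    by auto
  moreover have "card (Pow A - Pow (A - {j})) = card (Pow A) - card (Pow (A - {j}))"
    using assms(1) by (intro card_Diff_subset) auto
  moreover have "card A = Suc (card (A - {j}))"
    using card_Suc_Diff1[OF assms] by simp
  ultimately show ?thesis
    using assms(1) by (simp add: card_Pow)
qed

lemma card_Pow_disjoint:
  assumes "finite A" "E \<subseteq> A"
  shows "card {a \<in> Pow A. a \<inter> E = {}} = 2 ^ (card A - card E)"
proof -
  have "{a \<in> Pow A. a \<inter> E = {}} = Pow (A - E)"
    by auto
  then show ?thesis
    using assms by (simp add: card_Pow card_Diff_subset finite_subset)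
qed

lemma sum_card_Pow:
  assumes "finite A"
  shows "2 * (\<Sum>a\<in>Pow A. card a) = card A * 2 ^ card A"
proof -
  have "(\<Sum>a\<in>Pow A. card a) = (\<Sum>a\<in>Pow A. \<Sum>j\<in>A. if j \<in> a then 1 else 0)"
    using assms by (intro sum.cong) (auto simp: sum.inter_restrict[symmetric] Int_absorb1)
  also have "\<dots> = (\<Sum>j\<in>A. \<Sum>a\<in>Pow A. if j \<in> a then 1 else 0)"
    by (rule sum.swap)
  also have "\<dots> = (\<Sum>j\<in>A. card {a \<in> Pow A. j \<in> a})"
    using assms by (simp add: sum.inter_filter[symmetric])
  also have "\<dots> = (\<Sum>j\<in>A. 2 ^ (card A - 1))"
    using assms by (intro sum.cong refl card_Pow_member)
  also have "\<dots> = card A * 2 ^ (card A - 1)"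
    by simp
  finally show ?thesis
    by (cases "card A") simp_all
qed

lemma sum_cyclic_dist:
  "4 * (\<Sum>x<r. min x (r - x)) + r mod 2 = (r::nat) ^ 2"
proof (induction r rule: nat_induct2)
  case (step r)
  have "(\<Sum>x<r + 2. min x (r + 2 - x)) = (\<Sum>x<Suc r. min (Suc x) (r + 1 - x))"
    by (simp add: sum.lessThan_Suc_shift del: sum.lessThan_Suc)
  also have "\<dots> = (\<Sum>x<Suc r. min x (r - x) + 1)"
    by (intro sum.cong) auto
  also have "\<dots> = (\<Sum>x<r. min x (r - x)) + r + 1"
    by (simp add: sum_Suc)
  finally show ?case
    using step.IH by (simp add: power2_eq_square algebra_simps)
qed simp_all

lemma sum_ring_tour_length:
  assumes "r \<ge> 2"
  shows "4 * (\<Sum>x<r. ring_tour_length r x) + 8 * r \<le> 5 * r ^ 2 + 8"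
proof -
  have "(\<Sum>x<r. ring_tour_length r x) \<le> (\<Sum>x<r. (r - 2) + min x (r - x) + (if x = 0 then 2 else 0))"
    by (intro sum_mono) (auto simp: ring_tour_length_def min_def)
  also have "\<dots> = (\<Sum>x<r. r - 2) + (\<Sum>x<r. min x (r - x)) + (\<Sum>x<r. if x = 0 then 2 else 0)"
    by (simp only: sum.distrib)
  also have "\<dots> = r * (r - 2) + (\<Sum>x<r. min x (r - x)) + 2"
    using assms by simp
  finally have "4 * (\<Sum>x<r. ring_tour_length r x) \<le> 4 * (r * (r - 2)) + r ^ 2 + 8"
    using sum_cyclic_dist[of r] by linarith
  moreover have "4 * (r * (r - 2)) + 8 * r = 4 * r ^ 2"
    using assms by (simp add: power2_eq_square algebra_simps diff_mult_distrib2)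
  ultimately show ?thesis
    by linarith
qed

lemma card_arc_coords:
  assumes "d \<ge> 1" "n = d * r" "y < r" "g \<le> r"
  shows "card ((\<lambda>t. (1 + d * ((y + t) mod r)) mod n) ` {..<g}) = g"
proof -
  have "inj_on (\<lambda>t. (y + t) mod r) {..<g}"
  proof (rule inj_onI)
    fix t t' assume "t \<in> {..<g}" "t' \<in> {..<g}" "(y + t) mod r = (y + t') mod r"
    moreover have "(y + s) mod r = (if y + s < r then y + s else y + s - r)" if "s < r" for s
      using assms(3) that by (simp add: mod_if le_mod_geq)
    ultimately show "t = t'"
      using assms(4) by (auto split: if_splits)
  qed
  moreover have "block d r ((1 + d * ((y + t) mod r)) mod n) = (y + t) mod r" for t
    using block_flip_coord[of d 1 "(y + t) mod r" r] assms(1-3) by simp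
  ultimately have "inj_on (block d r \<circ> (\<lambda>t. (1 + d * ((y + t) mod r)) mod n)) {..<g}"
    by (simp add: inj_on_def)
  then have "inj_on (\<lambda>t. (1 + d * ((y + t) mod r)) mod n) {..<g}"
    by (rule inj_on_imageI2)
  then show ?thesis
    by (simp add: card_image)
qed

lemma card_not_meets_all_arcs:
  assumes "d \<ge> 1" "n = d * r" "g \<le> r"
  shows "card {a \<in> Pow {..<n}. \<not> meets_all_arcs r g (block d r ` a)} \<le> r * 2 ^ (n - g)"
proof -
  define coord where "coord y = (1 + d * y) mod n" for y
  define arc where "arc y = (\<lambda>t. coord ((y + t) mod r)) ` {..<g}" for y
  have block_coord: "block d r (coord y) = y" if "y < r" for y
    unfolding coord_def using block_flip_coord[of d 1 y r] assms(1,2) that by simp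
  have arc_sub: "arc y \<subseteq> {..<n}" for y
    using assms unfolding arc_def coord_def by auto
  have "{a \<in> Pow {..<n}. \<not> meets_all_arcs r g (block d r ` a)}
      \<subseteq> (\<Union>y<r. {a \<in> Pow {..<n}. a \<inter> arc y = {}})"
  proof
    fix a assume "a \<in> {a \<in> Pow {..<n}. \<not> meets_all_arcs r g (block d r ` a)}"
    then obtain y where a: "a \<subseteq> {..<n}" and "y < r" and gap: "\<forall>t<g. (y + t) mod r \<notin> block d r ` a"
      unfolding meets_all_arcs_def by auto
    have "coord ((y + t) mod r) \<notin> a" if "t < g" for t
      using gap that block_coord \<open>y < r\<close> by (metis image_eqI mod_less_divisor gr_zeroI less_nat_zero_code)
    then have "a \<inter> arc y = {}"
      unfolding arc_def by blast
    then show "a \<in> (\<Union>y<r. {a \<in> Pow {..<n}. a \<inter> arc y = {}})"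
      using a \<open>y < r\<close> by blast
  qed
  then have "card {a \<in> Pow {..<n}. \<not> meets_all_arcs r g (block d r ` a)}
      \<le> card (\<Union>y<r. {a \<in> Pow {..<n}. a \<inter> arc y = {}})"
    by (intro card_mono) auto
  also have "\<dots> \<le> (\<Sum>y<r. card {a \<in> Pow {..<n}. a \<inter> arc y = {}})"
    by (rule card_UN_le) simp
  also have "\<dots> = r * 2 ^ (n - g)"
    using card_Pow_disjoint[OF _ arc_sub] card_arc_coords[OF assms(1,2) _ assms(3)]
    unfolding arc_def coord_def by simp
  finally show ?thesis .
qed

lemma rcr_td_eq_sum:
  "rcr_td n d r = (\<Sum>a\<in>Pow {..<n}. \<Sum>x<r. rcr_dist n d r ({}, 0) (a, x))"
  unfolding rcr_td_def rcr_vertices_def by (simp add: sum.cartesian_product)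

lemma rcr_td_upper:
  assumes "d \<ge> 1" "r \<ge> 2" "n = d * r"
  shows "4 * real (rcr_td n d r) \<le> 2 ^ n * (2 * real n * real r + 5 * (real r)\<^sup>2 - 8 * real r + 8)"
proof -
  define T where "T = (\<Sum>x<r. ring_tour_length r x)"
  define C where "C = (\<Sum>a\<in>Pow {..<n}. card a)"
  have "rcr_td n d r \<le> (\<Sum>a\<in>Pow {..<n}. \<Sum>x<r. ring_tour_length r x + card a)"
    unfolding rcr_td_eq_sum using rcr_dist_le_ring_tour[OF assms(1,3)] by (intro sum_mono) auto
  also have "\<dots> = 2 ^ n * T + r * C"
    unfolding T_def C_def by (simp add: sum.distrib sum_distrib_left card_Pow)
  finally have "4 * rcr_td n d r + 8 * r * 2 ^ n \<le> 2 ^ n * (4 * T + 8 * r) + 2 * r * (2 * C)"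
    by (simp add: algebra_simps)
  also have "\<dots> \<le> 2 ^ n * (5 * r\<^sup>2 + 8) + 2 * r * (n * 2 ^ n)"
    using sum_ring_tour_length[OF assms(2)] sum_card_Pow[of "{..<n}"] unfolding T_def C_def by simp
  finally have "real (4 * rcr_td n d r + 8 * r * 2 ^ n) \<le> real (2 ^ n * (5 * r\<^sup>2 + 8) + 2 * r * (n * 2 ^ n))"
    by (rule of_nat_mono)
  then show ?thesis
    by (simp add: algebra_simps)
qed

(* The coordinate (1 + d) mod n lies in block 1, so when it is in a the walk to x = 0 must leave 0. *)
lemma sum_rcr_dist_ge:
  assumes "d \<ge> 1" "r \<ge> 2" "n = d * r" "a \<subseteq> {..<n}"
  shows "r * card a + (\<Sum>x<r. min x (r - x)) + (if (1 + d) mod n \<in> a then 2 else 0)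
    \<le> (\<Sum>x<r. rcr_dist n d r ({}, 0) (a, x))"
proof -
  have "card a + min x (r - x) + (if x = 0 \<and> (1 + d) mod n \<in> a then 2 else 0) \<le> rcr_dist n d r ({}, 0) (a, x)"
    if "x < r" for x
  proof (cases "x = 0 \<and> (1 + d) mod n \<in> a")
    case True
    have "block d r ((1 + d * 1) mod (d * r)) = 1"
      using assms(1,2) by (intro block_flip_coord) auto
    then have "1 \<in> block d r ` a"
      using True assms(3) by force
    then show ?thesis
      using True rcr_dist_ge_two[OF assms(1,3,4,2)] by simp
  next
    case False
    then show ?thesis
      using rcr_dist_ge_cyclic_dist[OF assms(1,3,4) that] by (simp only: False if_False)
  qed
  then have "(\<Sum>x<r. card a + min x (r - x) + (if x = 0 \<and> (1 + d) mod n \<in> a then 2 else 0))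
      \<le> (\<Sum>x<r. rcr_dist n d r ({}, 0) (a, x))"
    by (intro sum_mono) simp
  moreover have "(\<Sum>x<r. if x = 0 \<and> (1 + d) mod n \<in> a then 2 else 0) = (if (1 + d) mod n \<in> a then 2 else 0 :: nat)"
    using assms(2) by (cases "(1 + d) mod n \<in> a") simp_all
  ultimately show ?thesis
    by (simp add: sum.distrib)
qed

lemma rcr_td_lower:
  assumes "d \<ge> 1" "r \<ge> 2" "n = d * r"
  shows "2 ^ n * (2 * real n * real r + (real r)\<^sup>2) \<le> 4 * real (rcr_td n d r)"
proof -
  define h where "h = (\<Sum>x<r. min x (r - x))"
  define C where "C = (\<Sum>a\<in>Pow {..<n}. card a)"
  define j where "j = (1 + d) mod n"
  have "j < n"
    using assms unfolding j_def by simp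
  have "(\<Sum>a\<in>Pow {..<n}. r * card a + h + (if j \<in> a then 2 else 0)) \<le> rcr_td n d r"
    unfolding rcr_td_eq_sum h_def j_def using sum_rcr_dist_ge[OF assms] by (intro sum_mono) auto
  moreover have "(\<Sum>a\<in>Pow {..<n}. r * card a + h + (if j \<in> a then 2 else 0))
      = r * C + 2 ^ n * h + 2 * card {a \<in> Pow {..<n}. j \<in> a}"
    unfolding C_def by (simp add: sum.distrib sum_distrib_left card_Pow sum.inter_filter[symmetric])
  moreover have "2 * card {a \<in> Pow {..<n}. j \<in> a} = 2 ^ n"
    using card_Pow_member[of "{..<n}" j] \<open>j < n\<close> by (cases n) simp_all
  ultimately have bound: "4 * (r * C) + 2 ^ n * (4 * h + 4) \<le> 4 * rcr_td n d r"
    by (simp add: algebra_simps)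
  have "2 * C = n * 2 ^ n"
    using sum_card_Pow[of "{..<n}"] unfolding C_def by simp
  then have "2 ^ n * (2 * n * r + r\<^sup>2) = 4 * (r * C) + 2 ^ n * r\<^sup>2"
    by (simp add: algebra_simps)
  also have "\<dots> \<le> 4 * (r * C) + 2 ^ n * (4 * h + 4)"
    using sum_cyclic_dist[of r] unfolding h_def by (intro add_left_mono mult_le_mono2) presburger
  finally have "real (2 ^ n * (2 * n * r + r\<^sup>2)) \<le> real (4 * rcr_td n d r)"
    using bound by (intro of_nat_mono) linarith
  then show ?thesis
    by (simp add: algebra_simps)
qed

lemma sum_rcr_dist_ge_arcs:
  assumes "d \<ge> 1" "n = d * r" "a \<subseteq> {..<n}"
  shows "real r * real (card a)
      + (if meets_all_arcs r g (block d r ` a)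
         then (real r)\<^sup>2 + real (\<Sum>x<r. min x (r - x)) - 2 * real g * real r else 0)
    \<le> real (\<Sum>x<r. rcr_dist n d r ({}, 0) (a, x))"
proof (cases "meets_all_arcs r g (block d r ` a)")
  case True
  have "real (card a) + real r + real (min x (r - x)) - 2 * real g \<le> real (rcr_dist n d r ({}, 0) (a, x))"
    if "x < r" for x
  proof -
    have "int (card a) + int r + int (min x (r - x)) - 2 * int g \<le> int (rcr_dist n d r ({}, 0) (a, x))"
      by (rule rcr_dist_ge_arcs[OF assms that True])
    then have "real_of_int (int (card a) + int r + int (min x (r - x)) - 2 * int g)
        \<le> real_of_int (int (rcr_dist n d r ({}, 0) (a, x)))"
      by (simp only: of_int_le_iff)
    then show ?thesis
      by simp
  qed
  then have "(\<Sum>x<r. real (card a) + real r + real (min x (r - x)) - 2 * real g)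
      \<le> (\<Sum>x<r. real (rcr_dist n d r ({}, 0) (a, x)))"
    by (intro sum_mono) simp
  then show ?thesis
    using True by (simp add: sum.distrib sum_subtractf power2_eq_square algebra_simps)
next
  case False
  have "card a \<le> rcr_dist n d r ({}, 0) (a, x)" if "x \<in> {..<r}" for x
    using rcr_dist_ge_cyclic_dist[OF assms] that by fastforce
  then have "(\<Sum>x<r. card a) \<le> (\<Sum>x<r. rcr_dist n d r ({}, 0) (a, x))"
    by (rule sum_mono)
  then have "real (r * card a) \<le> real (\<Sum>x<r. rcr_dist n d r ({}, 0) (a, x))"
    by (intro of_nat_mono) simp
  then show ?thesis
    using False by simp
qed

lemma rcr_td_ge_arcs:
  assumes "d \<ge> 1" "n = d * r"
  shows "real r * real (\<Sum>a\<in>Pow {..<n}. card a)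
      + real (card {a \<in> Pow {..<n}. meets_all_arcs r g (block d r ` a)})
        * ((real r)\<^sup>2 + real (\<Sum>x<r. min x (r - x)) - 2 * real g * real r)
    \<le> real (rcr_td n d r)"
proof -
  define Q where "Q = (real r)\<^sup>2 + real (\<Sum>x<r. min x (r - x)) - 2 * real g * real r"
  have "real r * real (card a) + (if meets_all_arcs r g (block d r ` a) then Q else 0)
      \<le> real (\<Sum>x<r. rcr_dist n d r ({}, 0) (a, x))" if "a \<in> Pow {..<n}" for a
    using sum_rcr_dist_ge_arcs[OF assms, of a g] that unfolding Q_def by simp
  then have "(\<Sum>a\<in>Pow {..<n}. real r * real (card a) + (if meets_all_arcs r g (block d r ` a) then Q else 0))
      \<le> (\<Sum>a\<in>Pow {..<n}. real (\<Sum>x<r. rcr_dist n d r ({}, 0) (a, x)))"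
    by (rule sum_mono)
  also have "\<dots> = real (rcr_td n d r)"
    unfolding rcr_td_eq_sum by simp
  finally have "(\<Sum>a\<in>Pow {..<n}. real r * real (card a) + (if meets_all_arcs r g (block d r ` a) then Q else 0))
      \<le> real (rcr_td n d r)" .
  moreover have "(\<Sum>a\<in>Pow {..<n}. (if meets_all_arcs r g (block d r ` a) then Q else 0))
      = real (card {a \<in> Pow {..<n}. meets_all_arcs r g (block d r ` a)}) * Q"
    by (simp add: sum.inter_filter[symmetric])
  ultimately show ?thesis
    unfolding Q_def[symmetric] by (simp add: sum.distrib sum_distrib_left)
qed

lemma rcr_td_ge_arcs_estimate:
  assumes "d \<ge> 1" "n = d * r"
  shows "2 ^ n * (2 * real n * real r + 5 * (real r)\<^sup>2 - 1 - 8 * real g * real r)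
      - 5 * (real r)\<^sup>2 * real (card {a \<in> Pow {..<n}. \<not> meets_all_arcs r g (block d r ` a)})
    \<le> 4 * real (rcr_td n d r)"
proof -
  define Good where "Good = {a \<in> Pow {..<n}. meets_all_arcs r g (block d r ` a)}"
  define Bad where "Bad = {a \<in> Pow {..<n}. \<not> meets_all_arcs r g (block d r ` a)}"
  define C where "C = (\<Sum>a\<in>Pow {..<n}. card a)"
  define Q where "Q = (real r)\<^sup>2 + real (\<Sum>x<r. min x (r - x)) - 2 * real g * real r"
  have "Good \<union> Bad = Pow {..<n}" "Good \<inter> Bad = {}"
    unfolding Good_def Bad_def by auto
  then have "card Good + card Bad = 2 ^ n"
    by (metis card_Pow card_Un_disjoint card_lessThan finite_Pow_iff finite_lessThan finite_Un)
  then have good: "real (card Good) = 2 ^ n - real (card Bad)"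
    by (metis add_diff_cancel_right' of_nat_add of_nat_numeral of_nat_power)
  have "real (4 * (\<Sum>x<r. min x (r - x)) + r mod 2) = real (r\<^sup>2)"
    using sum_cyclic_dist[of r] by simp
  then have "4 * Q = 5 * (real r)\<^sup>2 - real (r mod 2) - 8 * real g * real r"
    unfolding Q_def by (simp add: algebra_simps)
  moreover have "real (r mod 2) \<le> 1" "0 \<le> real (r mod 2) + 8 * real g * real r"
    by simp_all
  ultimately have Q4: "5 * (real r)\<^sup>2 - 1 - 8 * real g * real r \<le> 4 * Q" "4 * Q \<le> 5 * (real r)\<^sup>2"
    by linarith+
  have "2 * real C = real n * 2 ^ n"
    using sum_card_Pow[of "{..<n}"] unfolding C_def by (metis card_lessThan finite_lessThan of_nat_mult of_nat_numeral of_nat_power)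
  then have "2 ^ n * (2 * real n * real r + 5 * (real r)\<^sup>2 - 1 - 8 * real g * real r) - 5 * (real r)\<^sup>2 * real (card Bad)
      = 2 * real r * (2 * real C) + (2 ^ n * (5 * (real r)\<^sup>2 - 1 - 8 * real g * real r) - real (card Bad) * (5 * (real r)\<^sup>2))"
    by (simp add: algebra_simps)
  also have "\<dots> \<le> 2 * real r * (2 * real C) + (2 ^ n * (4 * Q) - real (card Bad) * (4 * Q))"
    using Q4 by (intro add_left_mono diff_mono mult_left_mono) auto
  also have "\<dots> = 4 * (real r * real C + real (card Good) * Q)"
    unfolding good by (simp add: algebra_simps)
  also have "\<dots> \<le> 4 * real (rcr_td n d r)"
    using rcr_td_ge_arcs[OF assms, of g] unfolding Good_def C_def Q_def by simp
  finally show ?thesis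
    unfolding Bad_def .
qed

lemma four_mult_add_four_le_two_power:
  "5 \<le> k \<Longrightarrow> 4 * k + 4 \<le> (2::nat) ^ k"
  by (induction k rule: dec_induct) simp_all

lemma arc_length_for_large_ring:
  assumes "r \<ge> 2 ^ 9"
  obtains g where "2 * g \<le> r" "r * r \<le> 2 ^ g" "8 * real g + 6 \<le> 20 * (log 2 (real r))\<^sup>2"
proof -
  obtain k where k: "2 ^ k \<le> r" "r < 2 ^ (k + 1)"
    using ex_power_ivl1[of 2 r] assms by auto
  have "9 \<le> k"
  proof (rule ccontr)
    assume "\<not> 9 \<le> k"
    then have "(2::nat) ^ (k + 1) \<le> 2 ^ 9"
      by (intro power_increasing) auto
    then show False
      using k assms by linarith
  qed
  show ?thesis
  proof (rule that[of "2 * k + 2"])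
    show "2 * (2 * k + 2) \<le> r"
      using four_mult_add_four_le_two_power[of k] \<open>9 \<le> k\<close> k(1) by simp
    have "r * r \<le> 2 ^ (k + 1) * 2 ^ (k + 1)"
      using k(2) by (intro mult_le_mono) auto
    also have "\<dots> = 2 ^ ((k + 1) + (k + 1))"
      by (rule power_add[symmetric])
    finally show "r * r \<le> 2 ^ (2 * k + 2)"
      by (simp add: mult_2)
    define L where "L = log 2 (real r)"
    have "real k \<le> L"
      unfolding L_def using le_log2_of_power[OF k(1)] .
    moreover have "9 * L \<le> L * L"
      using \<open>9 \<le> k\<close> \<open>real k \<le> L\<close> by (intro mult_right_mono) auto
    moreover have "8 * real (2 * k + 2) + 6 = 16 * real k + 22" "9 \<le> L"
      using \<open>9 \<le> k\<close> \<open>real k \<le> L\<close> by simp_all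
    ultimately show "8 * real (2 * k + 2) + 6 \<le> 20 * L\<^sup>2"
      unfolding power2_eq_square by linarith
  qed
qed

lemma card_not_meets_all_arcs_le_power:
  assumes "d \<ge> 1" "n = d * r" "g \<le> r" "r * r \<le> 2 ^ g"
  shows "real r * real (card {a \<in> Pow {..<n}. \<not> meets_all_arcs r g (block d r ` a)}) \<le> 2 ^ n"
proof -
  have "g \<le> n"
    using assms(1-3) by (simp add: le_trans)
  have "r * card {a \<in> Pow {..<n}. \<not> meets_all_arcs r g (block d r ` a)} \<le> r * (r * 2 ^ (n - g))"
    using card_not_meets_all_arcs[OF assms(1-3)] by simp
  also have "\<dots> \<le> 2 ^ g * 2 ^ (n - g)"
    using assms(4) by (simp add: mult.assoc[symmetric])
  also have "\<dots> = 2 ^ n"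
    using \<open>g \<le> n\<close> by (simp flip: power_add)
  finally show ?thesis
    by (metis of_nat_le_iff of_nat_mult of_nat_numeral of_nat_power)
qed

lemma rcr_td_lower_log:
  assumes "d \<ge> 1" "n = d * r" "r \<ge> 2 ^ 9"
  shows "2 ^ n * (2 * real n * real r + 5 * (real r)\<^sup>2 - 20 * real r * (log 2 (real r))\<^sup>2)
    \<le> 4 * real (rcr_td n d r)"
proof -
  obtain g where g: "2 * g \<le> r" "r * r \<le> 2 ^ g" "8 * real g + 6 \<le> 20 * (log 2 (real r))\<^sup>2"
    using arc_length_for_large_ring[OF assms(3)] by blast
  define B where "B = card {a \<in> Pow {..<n}. \<not> meets_all_arcs r g (block d r ` a)}"
  have "real r * (real r * real B) \<le> real r * 2 ^ n"
    using card_not_meets_all_arcs_le_power[OF assms(1,2) _ g(2)] g(1) unfolding B_def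
    by (intro mult_left_mono) auto
  then have bad: "5 * (real r)\<^sup>2 * real B \<le> 2 ^ n * (5 * real r)"
    by (simp add: power2_eq_square algebra_simps)
  have "real r * (8 * real g + 6) \<le> real r * (20 * (log 2 (real r))\<^sup>2)"
    using g(3) by (rule mult_left_mono) simp
  then have "2 * real n * real r + 5 * (real r)\<^sup>2 - 20 * real r * (log 2 (real r))\<^sup>2
      \<le> (2 * real n * real r + 5 * (real r)\<^sup>2 - 1 - 8 * real g * real r) - 5 * real r"
    using assms(3) by (simp add: algebra_simps)
  then have "2 ^ n * (2 * real n * real r + 5 * (real r)\<^sup>2 - 20 * real r * (log 2 (real r))\<^sup>2)
      \<le> 2 ^ n * ((2 * real n * real r + 5 * (real r)\<^sup>2 - 1 - 8 * real g * real r) - 5 * real r)"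
    by (rule mult_left_mono) simp
  also have "\<dots> = 2 ^ n * (2 * real n * real r + 5 * (real r)\<^sup>2 - 1 - 8 * real g * real r) - 2 ^ n * (5 * real r)"
    by (rule right_diff_distrib)
  also have "\<dots> \<le> 4 * real (rcr_td n d r)"
    using rcr_td_ge_arcs_estimate[OF assms(1,2), of g] bad unfolding B_def by linarith
  finally show ?thesis .
qed

theorem mainTheorem12:
  fixes d r n :: nat
  assumes "d \<ge> 1" and "r \<ge> 3" and "n = d * r" and "n \<ge> 2"
  shows "(r \<ge> 2^9 \<longrightarrow>
            2 ^ (n - 2) * real r ^ 2 * (2 * real d + 5) *
              (1 - 20 * (log 2 (real r))\<^sup>2 / (2 * real n + 5 * real r))
              \<le> real (rcr_td n d r)
          \<and> real (rcr_td n d r)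
              \<le> 2 ^ (n - 2) * real r ^ 2 * (2 * real d + 5) *
                 (1 - 8 * (real r - 1) / (2 * real n * real r + 5 * (real r)\<^sup>2)))
       \<and> (r < 2^9 \<longrightarrow>
            2 ^ (n - 2) * (2 * real n * real r + (real r)\<^sup>2) \<le> real (rcr_td n d r)
          \<and> real (rcr_td n d r)
              \<le> 2 ^ (n - 2) * (2 * real n * real r + 5 * (real r)\<^sup>2 - 8 * real r + 8))"
proof -
  have pow: "(2::real) ^ n = 4 * 2 ^ (n - 2)"
    using assms(4) by (auto simp: le_iff_add power_add)
  have n: "real n = real d * real r" and "real r \<ge> 3"
    using assms(2,3) by simp_all
  then have den: "2 * real n + 5 * real r > 0" "2 * real n * real r + 5 * (real r)\<^sup>2 > 0"
    by (simp_all add: add_nonneg_pos)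
  have upper: "real (rcr_td n d r) \<le> 2 ^ (n - 2) * (2 * real n * real r + 5 * (real r)\<^sup>2 - 8 * real r + 8)"
    using rcr_td_upper[OF assms(1) _ assms(3)] assms(2) unfolding pow mult.assoc by linarith
  have lower: "2 ^ (n - 2) * (2 * real n * real r + (real r)\<^sup>2) \<le> real (rcr_td n d r)"
    using rcr_td_lower[OF assms(1) _ assms(3)] assms(2) unfolding pow mult.assoc by linarith
  have lower_log: "2 ^ (n - 2) * (2 * real n * real r + 5 * (real r)\<^sup>2 - 20 * real r * (log 2 (real r))\<^sup>2)
      \<le> real (rcr_td n d r)" if "r \<ge> 2 ^ 9"
    using rcr_td_lower_log[OF assms(1,3) that] unfolding pow mult.assoc by linarith
  have factor_log: "2 ^ (n - 2) * real r ^ 2 * (2 * real d + 5) * (1 - 20 * (log 2 (real r))\<^sup>2 / (2 * real n + 5 * real r))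
      = 2 ^ (n - 2) * (2 * real n * real r + 5 * (real r)\<^sup>2 - 20 * real r * (log 2 (real r))\<^sup>2)"
    using den(1) unfolding n by (simp add: field_simps power2_eq_square)
  have factor_lin: "2 ^ (n - 2) * real r ^ 2 * (2 * real d + 5) * (1 - 8 * (real r - 1) / (2 * real n * real r + 5 * (real r)\<^sup>2))
      = 2 ^ (n - 2) * (2 * real n * real r + 5 * (real r)\<^sup>2 - 8 * real r + 8)"
    using den(2) unfolding n by (simp add: field_simps power2_eq_square)
  show ?thesis
    unfolding factor_log factor_lin using upper lower lower_log by blast
qed

end
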